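(* Let $\mathbf{b}=(b_n)_{n\in\mathbb{N}_0}$ be a $D$-sequence with $\frac{b_{n+1}}{b_n}\to\infty$, and let $\iota:(\mathbb{Z},\tau_{\mathbf{b}})\to c_0(\mathbb{T})$, $k\mapsto(\frac{k}{b_n}+\mathbb{Z})_{n\in\mathbb{N}}$. Then $\iota(\mathbb{Z})$ is dually embedded in $c_0(\mathbb{T})$: every continuous character of $(\mathbb{Z},\tau_{\mathbf{b}})$ is of the form $\psi\circ\iota$ for some continuous character $\psi$ of $c_0(\mathbb{T})$.
   Context: $\mathbb{T}=\mathbb{R}/\mathbb{Z}$; $\mathbb{T}_m=[-\frac{1}{4m},\frac{1}{4m}]+\mathbb{Z}$. $c_0(\mathbb{T})$ is the group of sequences $(x_n)_{n\in\mathbb{N}}$ in $\mathbb{T}$ converging to $0$, with the topology of uniform convergence. A $D$-sequence is a sequence $\mathbf{b}=(b_n)_{n\in\mathbb{N}_0}$ of natural numbers with $b_0=1$, $b_n\mid b_{n+1}$, $b_n\neq b_{n+1}$. $\tau_{\mathbf{b}}$ is the group topology on $\mathbb{Z}$ with neighborhood basis at $0$ given by $V_{\mathbf{b},m}=\{k\in\mathbb{Z}: \frac{k}{b_n}+\mathbb{Z}\in\mathbb{T}_m \text{ for all } n\in\mathbb{N}\}$, $m\in\mathbb{N}$. *)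

theory Defs
  imports "HOL-Analysis.Analysis"
begin

text \<open>The circle group T = R/Z is represented by real representatives; tnorm x is the
  distance of x to the nearest integer, i.e. the norm of x + Z in T.\<close>
definition tnorm :: "real \<Rightarrow> real" where
  "tnorm x = \<bar>x - real_of_int (round x)\<bar>"

definition inTm :: "nat \<Rightarrow> real \<Rightarrow> bool" where
  "inTm m x \<longleftrightarrow> tnorm x \<le> 1 / (4 * real m)"

definition D_sequence :: "(nat \<Rightarrow> nat) \<Rightarrow> bool" where
  "D_sequence b \<longleftrightarrow> (\<forall>n. b n > 0) \<and> b 0 = 1 \<and>
     (\<forall>n. b n dvd b (Suc n) \<and> b n \<noteq> b (Suc n))"

text \<open>Neighbourhood basis V_{b,m} of 0 of tau_b (n ranges over N = {1,2,...}).\<close>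
definition Vb :: "(nat \<Rightarrow> nat) \<Rightarrow> nat \<Rightarrow> int set" where
  "Vb b m = {k. \<forall>n\<ge>1. inTm m (real_of_int k / real (b n))}"

text \<open>Continuous characters of (Z, tau_b), with values in the unit circle
  (identified with T via t + Z |-> exp(2 pi i t)).  Continuity at every point k0,
  using the neighbourhood basis k0 + V_{b,m}.\<close>
definition cont_char_Zb :: "(nat \<Rightarrow> nat) \<Rightarrow> (int \<Rightarrow> complex) \<Rightarrow> bool" where
  "cont_char_Zb b chi \<longleftrightarrow>
     (\<forall>k. cmod (chi k) = 1) \<and> (\<forall>k l. chi (k + l) = chi k * chi l) \<and>
     (\<forall>k0. \<forall>\<epsilon>>0. \<exists>m\<ge>1. \<forall>k\<in>Vb b m. cmod (chi (k0 + k) - chi k0) < \<epsilon>)"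

text \<open>c_0(T), indexed by N = {1,2,...} via the shift n |-> Suc n: real sequences whose
  classes mod Z converge to 0.\<close>
definition c0T :: "(nat \<Rightarrow> real) set" where
  "c0T = {x. (\<lambda>n. tnorm (x n)) \<longlonglongrightarrow> 0}"

text \<open>Continuous characters of c_0(T) (topology of uniform convergence), given on
  representatives: homomorphisms into the unit circle that are trivial on integer-valued
  sequences (so well defined on c_0(T)) and continuous for the uniform metric.\<close>
definition cont_char_c0T :: "((nat \<Rightarrow> real) \<Rightarrow> complex) \<Rightarrow> bool" where
  "cont_char_c0T \<psi> \<longleftrightarrow>
     (\<forall>x\<in>c0T. cmod (\<psi> x) = 1) \<and>
     (\<forall>x\<in>c0T. \<forall>y\<in>c0T. \<psi> (\<lambda>n. x n + y n) = \<psi> x * \<psi> y) \<and>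
     (\<forall>x\<in>c0T. (\<forall>n. x n \<in> \<int>) \<longrightarrow> \<psi> x = 1) \<and>
     (\<forall>x0\<in>c0T. \<forall>\<epsilon>>0. \<exists>\<delta>>0. \<forall>y\<in>c0T.
        (\<forall>n. tnorm (y n - x0 n) < \<delta>) \<longrightarrow> cmod (\<psi> y - \<psi> x0) < \<epsilon>)"

text \<open>iota k = (k / b_n + Z)_{n in N}, with coordinate n in N stored at index n - 1.\<close>
definition iota :: "(nat \<Rightarrow> nat) \<Rightarrow> int \<Rightarrow> nat \<Rightarrow> real" where
  "iota b k = (\<lambda>n. real_of_int k / real (b (Suc n)))"

end

theory Submission imports Defs begin

(* A continuous character chi of (Z, tau_b) is k |-> e(k alpha) with e(t) = exp(2 pi i t).
   Continuity at 0 gives m such that ||k alpha|| < 1/4 for all k in V_{b,m}.  The heart of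
   the proof (some_bN_alpha_integer) shows that then b_N alpha is an integer for some N:
   otherwise write delta_N for the signed distance of b_N alpha to the nearest integer.
   Integers k = sum_N j_N b_N with small coefficients j_N lie in V_{b,m}, and
   k alpha = sum_N j_N delta_N mod Z, so no such sum may lie in [1/4, 3/4].  Using one term
   shows delta_N -> 0; as delta_{N+1} = (b_{N+1}/b_N) delta_N while this product stays
   below 1/2, the product is >= 1/2 infinitely often; summing 8m suitable multiples of
   such delta_N lands in [1/4, 1/2], a contradiction.  With b_{N+1} alpha = p an integer,
   chi = psi o iota for the continuous character psi(x) = e(p x_N) of c_0(T), which only
   reads the coordinate with index N. *)

section \<open>The circle group\<close>

lemma tnorm_le_dist_int: "tnorm x \<le> \<bar>x - real_of_int n\<bar>"
  unfolding tnorm_def by (rule round_diff_minimal)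

lemma tnorm_le_half: "tnorm x \<le> 1/2"
  unfolding tnorm_def using of_int_round_le[of x] of_int_round_ge[of x] by linarith

lemma tnorm_ge_quarter:
  assumes "1/4 \<le> S" "S \<le> 3/4"
  shows "1/4 \<le> tnorm (real_of_int z + S)"
proof -
  define w where "w = z - round (real_of_int z + S)"
  have "tnorm (real_of_int z + S) = \<bar>real_of_int w + S\<bar>"
    unfolding tnorm_def w_def by simp
  moreover have "1/4 \<le> \<bar>real_of_int w + S\<bar>"
  proof (cases "w \<ge> 0")
    case True then show ?thesis using assms by simp
  next
    case False then have "real_of_int w \<le> -1" by simp
    then show ?thesis using assms by simp
  qed
  ultimately show ?thesis by simp
qed

definition sdist :: "real \<Rightarrow> real" where
  "sdist x = x - real_of_int (round x)"

lemma tnorm_sdist: "tnorm x = \<bar>sdist x\<bar>"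
  unfolding tnorm_def sdist_def ..

lemma sdist_le_half: "\<bar>sdist x\<bar> \<le> 1/2"
  using tnorm_le_half tnorm_sdist by metis

lemma sdist_zero_iff: "sdist x = 0 \<longleftrightarrow> x \<in> \<int>"
  unfolding sdist_def by (metis Ints_cases Ints_of_int eq_iff_diff_eq_0 round_of_int)

lemma sdist_scale_int:
  assumes "\<bar>real_of_int q * sdist x\<bar> < 1/2"
  shows "sdist (real_of_int q * x) = real_of_int q * sdist x"
proof -
  have "\<bar>real_of_int q * x - real_of_int (q * round x)\<bar> < 1/2"
    using assms by (simp add: sdist_def algebra_simps)
  then have "round (real_of_int q * x) = q * round x" by (rule round_unique')
  then show ?thesis by (simp add: sdist_def algebra_simps)
qed

definition turn :: "real \<Rightarrow> complex" where
  "turn t = cis (2 * pi * t)"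

lemma turn_add: "turn (x + y) = turn x * turn y"
  unfolding turn_def by (simp add: cis_mult distrib_left)

lemma turn_int [simp]: "turn (real_of_int n) = 1"
  unfolding turn_def by simp

lemma turn_zero [simp]: "turn 0 = 1"
  unfolding turn_def by simp

lemma turn_shift_int: "turn (x + real_of_int n) = turn x"
  by (simp add: turn_add)

lemma norm_turn [simp]: "cmod (turn x) = 1"
  unfolding turn_def by simp

lemma turn_sdist: "turn (sdist x) = turn x"
  using turn_shift_int[of "sdist x" "round x"] by (simp add: sdist_def)

lemma turn_far_from_one:
  assumes "1/4 \<le> tnorm x"
  shows "1 \<le> cmod (turn x - 1)"
proof -
  define y where "y = sdist x"
  have y: "1/4 \<le> \<bar>y\<bar>" "\<bar>y\<bar> \<le> 1/2"
    using assms sdist_le_half by (auto simp: y_def tnorm_sdist)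
  have "cos (2*pi*y) = - cos (pi - 2*pi*\<bar>y\<bar>)"
    by (cases "y \<ge> 0") (auto simp: cos_diff)
  also have "\<dots> \<le> 0"
    using cos_ge_zero[of "pi - 2*pi*\<bar>y\<bar>"] y pi_gt_zero by (auto simp: field_simps)
  finally have "1 \<le> \<bar>Re (turn y - 1)\<bar>" by (simp add: turn_def)
  also have "\<dots> \<le> cmod (turn y - 1)" by (rule abs_Re_le_cmod)
  finally show ?thesis by (simp add: y_def turn_sdist)
qed

lemma turn_scaled_continuous_at_0:
  assumes "e > 0"
  shows "\<exists>d>0. \<forall>s. \<bar>s\<bar> < d \<longrightarrow> cmod (turn (c * s) - 1) < e"
proof -
  have "isCont (\<lambda>s. turn (c * s)) 0"
    unfolding turn_def cis_conv_exp by (intro continuous_intros)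
  then show ?thesis
    using assms unfolding continuous_at_eps_delta by (simp add: dist_norm)
qed

section \<open>D-sequences and the neighbourhoods V_{b,m}\<close>

lemma D_pos: "D_sequence b \<Longrightarrow> b n > 0"
  by (simp add: D_sequence_def)

lemma D_step:
  assumes "D_sequence b"
  obtains q where "q \<ge> 2" "b (Suc n) = b n * q"
proof -
  from assms have "b n dvd b (Suc n)" by (simp add: D_sequence_def)
  then obtain q where q: "b (Suc n) = b n * q" by (rule dvdE)
  have "b (Suc n) > 0" "b n \<noteq> b (Suc n)" using assms by (auto simp: D_sequence_def)
  then have "q \<noteq> 0" "q \<noteq> 1" using q by auto
  then have "q \<ge> 2" by linarith
  with q show thesis using that by blast
qed

lemma D_dvd:
  assumes "D_sequence b" "n \<le> N"
  shows "b n dvd b N"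
  using assms(2)
proof (induction N rule: dec_induct)
  case (step k)
  have "b k dvd b (Suc k)" using assms(1) by (simp add: D_sequence_def)
  with step.IH show ?case by (rule dvd_trans)
qed simp

text \<open>Since b grows at least geometrically, b_1 + ... + b_n \<le> 2 b_n.\<close>
lemma D_partial_sum_le:
  assumes "D_sequence b"
  shows "(\<Sum>N<n. real (b (Suc N))) \<le> 2 * real (b n)"
proof (induction n)
  case (Suc n)
  obtain q where "q \<ge> 2" "b (Suc n) = b n * q" using D_step[OF assms] .
  then have "b n * 2 \<le> b (Suc n)" by simp
  then have "2 * real (b n) \<le> real (b (Suc n))" by linarith
  then show ?case using Suc by simp
qed simp

text \<open>Integer combinations sum_N j_N b_N whose coefficients are small compared with the
  ratios b_{N+1}/b_N lie in V_{b,m}: dividing by b_n, the terms with N \<ge> n are integers and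
  the remaining ones add up to at most 1/(4m).\<close>
lemma small_combination_in_Vb:
  assumes D: "D_sequence b" and m: "m \<ge> 1" and B: "finite B"
    and j: "\<And>N. N \<in> B \<Longrightarrow> real_of_int \<bar>j N\<bar> * (8 * real m) \<le> real (b (Suc N)) / real (b N)"
  shows "(\<Sum>N\<in>B. j N * int (b N)) \<in> Vb b m"
  unfolding Vb_def inTm_def
proof (intro CollectI allI impI)
  fix n :: nat
  have bn: "real (b n) > 0" using D_pos[OF D] by simp
  define f where "f N = real_of_int (j N) * real (b N) / real (b n)" for N
  have split: "real_of_int (\<Sum>N\<in>B. j N * int (b N)) / real (b n)
      = sum f (B \<inter> {..<n}) + sum f (B - {..<n})"
    unfolding f_def by (simp add: sum_divide_distrib sum.Int_Diff[OF B])
  have "sum f (B - {..<n}) \<in> \<int>"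
  proof (rule Ints_sum)
    fix N assume "N \<in> B - {..<n}"
    then have "b n dvd b N" using D_dvd[OF D] by auto
    then have "f N = real_of_int (j N) * real (b N div b n)"
      unfolding f_def by (simp add: real_of_nat_div)
    then show "f N \<in> \<int>" by simp
  qed
  then obtain z where z: "sum f (B - {..<n}) = real_of_int z" by (auto elim: Ints_cases)
  have "\<bar>sum f (B \<inter> {..<n})\<bar> \<le> (\<Sum>N\<in>B \<inter> {..<n}. \<bar>f N\<bar>)" by (rule sum_abs)
  also have "\<dots> \<le> (\<Sum>N\<in>B \<inter> {..<n}. real (b (Suc N)) / (8 * real m * real (b n)))"
  proof (rule sum_mono)
    fix N assume N: "N \<in> B \<inter> {..<n}"
    have bN: "real (b N) > 0" using D_pos[OF D] by simp
    have "\<bar>f N\<bar> = real_of_int \<bar>j N\<bar> * real (b N) / real (b n)"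
      unfolding f_def by (simp add: abs_mult)
    also have "\<dots> \<le> (real (b (Suc N)) / real (b N) / (8 * real m)) * real (b N) / real (b n)"
      using j[of N] N m bn bN by (intro divide_right_mono mult_right_mono) (auto simp: field_simps)
    also have "\<dots> = real (b (Suc N)) / (8 * real m * real (b n))"
      using bN by (simp add: field_simps)
    finally show "\<bar>f N\<bar> \<le> real (b (Suc N)) / (8 * real m * real (b n))" .
  qed
  also have "\<dots> \<le> (\<Sum>N<n. real (b (Suc N))) / (8 * real m * real (b n))"
    unfolding sum_divide_distrib[symmetric] using m bn
    by (intro divide_right_mono sum_mono2) auto
  also have "\<dots> \<le> 2 * real (b n) / (8 * real m * real (b n))"
    using D_partial_sum_le[OF D, of n] m bn by (intro divide_right_mono) auto
  also have "\<dots> = 1 / (4 * real m)" using bn by (simp add: field_simps)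
  finally have "\<bar>sum f (B \<inter> {..<n})\<bar> \<le> 1 / (4 * real m)" .
  moreover have "tnorm (real_of_int (\<Sum>N\<in>B. j N * int (b N)) / real (b n))
      \<le> \<bar>sum f (B \<inter> {..<n})\<bar>"
    using tnorm_le_dist_int[of "sum f (B \<inter> {..<n}) + real_of_int z" z] by (simp only: split z)
  ultimately show "tnorm (real_of_int (\<Sum>N\<in>B. j N * int (b N)) / real (b n)) \<le> 1 / (4 * real m)"
    by linarith
qed

lemma integer_multiple_near:
  fixes d t :: real
  assumes "d \<noteq> 0" "t > 0"
  shows "\<exists>j::int. t \<le> real_of_int j * d \<and> real_of_int j * d < t + \<bar>d\<bar>
                   \<and> real_of_int \<bar>j\<bar> < t / \<bar>d\<bar> + 1"
proof -
  define a where "a = \<lceil>t / \<bar>d\<bar>\<rceil>"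
  have d: "\<bar>d\<bar> > 0" using assms by simp
  have a: "t / \<bar>d\<bar> \<le> real_of_int a" "real_of_int a < t / \<bar>d\<bar> + 1"
    unfolding a_def by linarith+
  then have "a \<ge> 0" using assms d by (smt (verit) divide_pos_pos of_int_less_0_iff)
  moreover have "t \<le> real_of_int a * \<bar>d\<bar>" "real_of_int a * \<bar>d\<bar> < t + \<bar>d\<bar>"
    using a d by (simp_all add: field_simps)
  moreover define j where "j = (if d \<ge> 0 then a else - a)"
  ultimately have "real_of_int j * d = real_of_int a * \<bar>d\<bar>" "\<bar>j\<bar> = a" by auto
  then show ?thesis
    using a \<open>t \<le> real_of_int a * \<bar>d\<bar>\<close> \<open>real_of_int a * \<bar>d\<bar> < t + \<bar>d\<bar>\<close>
    by (intro exI[of _ j]) simp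
qed

section \<open>Characters that are small on V_{b,m}\<close>

text \<open>If ||k alpha|| < 1/4 on V_{b,m}, then no small-coefficient combination of the signed
  distances sdist(b_N alpha) lies in [1/4, 3/4]: the corresponding k = sum_N j_N b_N lies in
  V_{b,m} and k alpha equals that combination modulo Z.\<close>
lemma combination_not_in_middle:
  assumes D: "D_sequence b" and m: "m \<ge> 1"
    and V: "\<forall>k\<in>Vb b m. tnorm (real_of_int k * \<alpha>) < 1/4"
    and B: "finite B"
    and j: "\<And>N. N \<in> B \<Longrightarrow> real_of_int \<bar>j N\<bar> * (8 * real m) \<le> real (b (Suc N)) / real (b N)"
  shows "\<not> (1/4 \<le> (\<Sum>N\<in>B. real_of_int (j N) * sdist (real (b N) * \<alpha>))
            \<and> (\<Sum>N\<in>B. real_of_int (j N) * sdist (real (b N) * \<alpha>)) \<le> 3/4)"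
proof
  define S where "S = (\<Sum>N\<in>B. real_of_int (j N) * sdist (real (b N) * \<alpha>))"
  define k where "k = (\<Sum>N\<in>B. j N * int (b N))"
  assume "1/4 \<le> S \<and> S \<le> 3/4"
  then have "1/4 \<le> tnorm (real_of_int (\<Sum>N\<in>B. j N * round (real (b N) * \<alpha>)) + S)"
    by (intro tnorm_ge_quarter) auto
  also have "real_of_int (\<Sum>N\<in>B. j N * round (real (b N) * \<alpha>)) + S = real_of_int k * \<alpha>"
    unfolding S_def k_def by (simp add: sum.distrib[symmetric] sum_distrib_left sum_distrib_right sdist_def algebra_simps)
  finally have "1/4 \<le> tnorm (real_of_int k * \<alpha>)" .
  moreover have "k \<in> Vb b m"
    unfolding k_def using small_combination_in_Vb[OF D m B] j by blast
  ultimately show False using V by fastforce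
qed

text \<open>Using a single term: if b_{N+1}/b_N \<rightarrow> \<infinity>, the distances of b_N alpha to Z tend to 0.\<close>
lemma sdist_eventually_small:
  assumes D: "D_sequence b" and m: "m \<ge> 1"
    and lim: "filterlim (\<lambda>n. real (b (Suc n)) / real (b n)) at_top sequentially"
    and V: "\<forall>k\<in>Vb b m. tnorm (real_of_int k * \<alpha>) < 1/4"
  shows "\<forall>\<^sub>F N in sequentially. \<bar>sdist (real (b N) * \<alpha>)\<bar> \<le> 1 / (32 * real m)"
proof -
  have "\<forall>\<^sub>F N in sequentially. 8 * real m * (8 * real m + 1) \<le> real (b (Suc N)) / real (b N)"
    using lim unfolding filterlim_at_top by blast
  then show ?thesis
  proof (rule eventually_mono)
    fix N assume r: "8 * real m * (8 * real m + 1) \<le> real (b (Suc N)) / real (b N)"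
    define \<delta> where "\<delta> = sdist (real (b N) * \<alpha>)"
    show "\<bar>\<delta>\<bar> \<le> 1 / (32 * real m)"
    proof (rule ccontr)
      assume "\<not> \<bar>\<delta>\<bar> \<le> 1 / (32 * real m)"
      then have large: "1 / (32 * real m) < \<bar>\<delta>\<bar>" by simp
      moreover have "0 < 1 / (32 * real m)" using m by simp
      ultimately have "\<delta> \<noteq> 0" by auto
      then obtain a :: int where a: "1/4 \<le> real_of_int a * \<delta>"
          "real_of_int a * \<delta> < 1/4 + \<bar>\<delta>\<bar>" "real_of_int \<bar>a\<bar> < (1/4) / \<bar>\<delta>\<bar> + 1"
        using integer_multiple_near[of \<delta> "1/4"] by auto
      have "(1/4) / \<bar>\<delta>\<bar> < (1/4) / (1 / (32 * real m))"
        using large m \<open>\<delta> \<noteq> 0\<close> by (intro divide_strict_left_mono) auto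
      then have "real_of_int \<bar>a\<bar> \<le> 8 * real m + 1" using a(3) by simp
      then have "real_of_int \<bar>a\<bar> * (8 * real m) \<le> (8 * real m + 1) * (8 * real m)"
        by (intro mult_right_mono) auto
      also have "\<dots> \<le> real (b (Suc N)) / real (b N)" using r by (simp add: algebra_simps)
      finally have "real_of_int \<bar>a\<bar> * (8 * real m) \<le> real (b (Suc N)) / real (b N)" .
      moreover have "real_of_int a * \<delta> \<le> 3/4" using a(2) sdist_le_half[of "real (b N) * \<alpha>"]
        by (simp add: \<delta>_def)
      ultimately show False
        using combination_not_in_middle[OF D m V, of "{N}" "\<lambda>_. a"] a(1) by (simp add: \<delta>_def)
    qed
  qed
qed

text \<open>If no b_N alpha is an integer, then (b_{N+1}/b_N) ||b_N alpha|| \<ge> 1/2 infinitely often: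
  while this product stays below 1/2, the distance to Z is multiplied by b_{N+1}/b_N \<ge> 2 in
  each step, which cannot go on forever as distances are at most 1/2.\<close>
lemma sdist_ratio_large_infinitely_often:
  assumes D: "D_sequence b" and not_int: "\<forall>N. real (b N) * \<alpha> \<notin> \<int>"
  shows "\<exists>N\<ge>M. 1/2 \<le> real (b (Suc N)) / real (b N) * \<bar>sdist (real (b N) * \<alpha>)\<bar>"
proof (rule ccontr)
  define \<delta> where "\<delta> N = sdist (real (b N) * \<alpha>)" for N
  assume "\<not> ?thesis"
  then have small: "real (b (Suc N)) / real (b N) * \<bar>\<delta> N\<bar> < 1/2" if "N \<ge> M" for N
    using that by (force simp: \<delta>_def)
  have double: "2 * \<bar>\<delta> N\<bar> \<le> \<bar>\<delta> (Suc N)\<bar>" if "N \<ge> M" for N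
  proof -
    obtain q where q: "q \<ge> 2" "b (Suc N) = b N * q" using D_step[OF D] .
    have "real (b (Suc N)) / real (b N) = real q" using q(2) D_pos[OF D, of N] by simp
    then have "\<bar>real_of_int (int q) * \<delta> N\<bar> < 1/2" using small[OF that] by (simp add: abs_mult)
    moreover have "real (b (Suc N)) * \<alpha> = real_of_int (int q) * (real (b N) * \<alpha>)"
      using q(2) by simp
      ultimately have "\<delta> (Suc N) = real q * \<delta> N"
      using sdist_scale_int[of "int q" "real (b N) * \<alpha>"] unfolding \<delta>_def by (metis of_int_of_nat_eq)
    then show ?thesis using q(1) by (simp add: abs_mult mult_right_mono)
  qed
  have grow: "2 ^ t * \<bar>\<delta> M\<bar> \<le> \<bar>\<delta> (M + t)\<bar>" for t
  proof (induction t)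
    case (Suc t)
    then have "2 ^ Suc t * \<bar>\<delta> M\<bar> \<le> 2 * \<bar>\<delta> (M + t)\<bar>" by simp
    also have "\<dots> \<le> \<bar>\<delta> (M + Suc t)\<bar>" using double[of "M + t"] by simp
    finally show ?case .
  qed simp
  have "\<bar>\<delta> M\<bar> > 0" using not_int sdist_zero_iff by (simp add: \<delta>_def)
  then obtain t where "1 / \<bar>\<delta> M\<bar> < 2 ^ t" using real_arch_pow[of 2 "1 / \<bar>\<delta> M\<bar>"] by auto
  then have "1 < 2 ^ t * \<bar>\<delta> M\<bar>" using \<open>\<bar>\<delta> M\<bar> > 0\<close> by (simp add: field_simps)
  then show False using grow[of t] sdist_le_half[of "real (b (M + t)) * \<alpha>"] by (simp add: \<delta>_def)
qed

lemma admissible_multiple: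
  assumes m: "m \<ge> 1" and nz: "\<delta> \<noteq> 0" and small: "\<bar>\<delta>\<bar> \<le> 1 / (32 * real m)"
    and large: "1/2 \<le> r * \<bar>\<delta>\<bar>"
  shows "\<exists>j::int. 1 / (32 * real m) \<le> real_of_int j * \<delta> \<and> real_of_int j * \<delta> \<le> 1 / (16 * real m)
                 \<and> real_of_int \<bar>j\<bar> * (8 * real m) \<le> r"
proof -
  define c where "c = 1 / (32 * real m)"
  have "c > 0" using m by (simp add: c_def)
  then obtain j :: int where j: "c \<le> real_of_int j * \<delta>" "real_of_int j * \<delta> < c + \<bar>\<delta>\<bar>"
      "real_of_int \<bar>j\<bar> < c / \<bar>\<delta>\<bar> + 1"
    using integer_multiple_near[OF nz] by blast
  have d: "\<bar>\<delta>\<bar> > 0" using nz by simp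
  have "real_of_int \<bar>j\<bar> * (8 * real m) \<le> (c / \<bar>\<delta>\<bar> + 1) * (8 * real m)"
    using j(3) by (intro mult_right_mono) auto
  also have "\<dots> = (c + \<bar>\<delta>\<bar>) * (8 * real m) / \<bar>\<delta>\<bar>" using d by (simp add: field_simps)
  also have "\<dots> \<le> (2 * c) * (8 * real m) / \<bar>\<delta>\<bar>"
    using small d m by (intro divide_right_mono mult_right_mono) (auto simp: c_def)
  also have "(2 * c) * (8 * real m) = 1/2" using m by (simp add: c_def)
  also have "1/2 / \<bar>\<delta>\<bar> \<le> r" using large d by (simp add: field_simps)
  finally have "real_of_int \<bar>j\<bar> * (8 * real m) \<le> r" .
  moreover have "real_of_int j * \<delta> \<le> 1 / (16 * real m)" using j(2) small by (simp add: c_def)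
  ultimately show ?thesis using j(1) unfolding c_def by blast
qed

text \<open>Otherwise pick 8m indices N beyond the point where ||b_N alpha|| \<le> c = 1/(32m) and with
  (b_{N+1}/b_N) ||b_N alpha|| \<ge> 1/2; multiples j_N sdist(b_N alpha) \<in> [c, 2c] have admissible
  coefficients and sum to a value in [1/4, 1/2].\<close>
lemma some_bN_alpha_integer:
  assumes D: "D_sequence b" and m: "m \<ge> 1"
    and lim: "filterlim (\<lambda>n. real (b (Suc n)) / real (b n)) at_top sequentially"
    and V: "\<forall>k\<in>Vb b m. tnorm (real_of_int k * \<alpha>) < 1/4"
  shows "\<exists>N. real (b N) * \<alpha> \<in> \<int>"
proof (rule ccontr)
  assume "\<not> ?thesis"
  then have not_int: "\<forall>N. real (b N) * \<alpha> \<notin> \<int>" by blast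
  define \<delta> where "\<delta> N = sdist (real (b N) * \<alpha>)" for N
  define r where "r N = real (b (Suc N)) / real (b N)" for N
  define c where "c = 1 / (32 * real m)"
  have nz: "\<delta> N \<noteq> 0" for N using not_int sdist_zero_iff by (simp add: \<delta>_def)
  obtain N0 where small: "\<And>N. N \<ge> N0 \<Longrightarrow> \<bar>\<delta> N\<bar> \<le> c"
    using sdist_eventually_small[OF D m lim V] by (auto simp: \<delta>_def c_def eventually_sequentially)
  have "infinite {N. N \<ge> N0 \<and> 1/2 \<le> r N * \<bar>\<delta> N\<bar>}"
    unfolding infinite_nat_iff_unbounded_le
    using sdist_ratio_large_infinitely_often[OF D not_int]
    by (metis (mono_tags) max.boundedE mem_Collect_eq r_def \<delta>_def)
  then obtain B where B: "finite B" "card B = 8 * m" "B \<subseteq> {N. N \<ge> N0 \<and> 1/2 \<le> r N * \<bar>\<delta> N\<bar>}"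
    using infinite_arbitrarily_large by blast
  have "\<forall>N\<in>B. \<exists>a::int. c \<le> real_of_int a * \<delta> N \<and> real_of_int a * \<delta> N \<le> 2 * c
                   \<and> real_of_int \<bar>a\<bar> * (8 * real m) \<le> r N"
    using admissible_multiple[OF m nz] small B(3) by (auto simp: c_def)
  then obtain j where j: "\<And>N. N \<in> B \<Longrightarrow> c \<le> real_of_int (j N) * \<delta> N"
      "\<And>N. N \<in> B \<Longrightarrow> real_of_int (j N) * \<delta> N \<le> 2 * c"
      "\<And>N. N \<in> B \<Longrightarrow> real_of_int \<bar>j N\<bar> * (8 * real m) \<le> r N"
    by metis
  have "real (card B) * c \<le> (\<Sum>N\<in>B. real_of_int (j N) * \<delta> N)"
    using j(1) by (intro sum_bounded_below) auto
  moreover have "(\<Sum>N\<in>B. real_of_int (j N) * \<delta> N) \<le> real (card B) * (2 * c)"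
    using j(2) by (intro sum_bounded_above) auto
  moreover have "real (card B) * c = 1/4" "real (card B) * (2 * c) = 1/2"
    using m by (simp_all add: B(2) c_def)
  ultimately show False
    using combination_not_in_middle[OF D m V B(1), of j] j(3) by (simp add: \<delta>_def r_def)
qed

section \<open>Characters of Z and of c_0(T)\<close>

lemma unit_homomorphism_int:
  fixes chi :: "int \<Rightarrow> complex"
  assumes norm: "\<And>k. cmod (chi k) = 1" and hom: "\<And>k l. chi (k + l) = chi k * chi l"
  shows "\<exists>\<alpha>. \<forall>k. chi k = turn (real_of_int k * \<alpha>)"
proof
  define \<alpha> where "\<alpha> = Arg (chi 1) / (2 * pi)"
  have nz: "chi k \<noteq> 0" for k using norm[of k] by auto
  have chi1: "chi 1 = turn \<alpha>"
    using cis_Arg[OF nz[of 1]] norm[of 1] by (simp add: turn_def \<alpha>_def sgn_div_norm)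
  have chi0: "chi 0 = 1" using hom[of 0 0] nz[of 0] by simp
  show "\<forall>k. chi k = turn (real_of_int k * \<alpha>)"
  proof
    fix k show "chi k = turn (real_of_int k * \<alpha>)"
    proof (induction k rule: int_induct[where k = 0])
      case base then show ?case using chi0 by simp
    next
      case (step1 i)
      have "chi (i + 1) = turn (real_of_int i * \<alpha> + \<alpha>)"
        using hom[of i 1] step1(2) chi1 by (simp add: turn_add)
      then show ?case by (simp add: algebra_simps)
    next
      case (step2 i)
      have "chi (i - 1) * turn \<alpha> = turn (real_of_int (i - 1) * \<alpha>) * turn \<alpha>"
        using hom[of "i - 1" 1] step2(2) chi1 by (simp add: turn_add[symmetric] algebra_simps)
      moreover have "turn \<alpha> \<noteq> 0" by (simp add: turn_def)
      ultimately show ?case by simp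
    qed
  qed
qed

text \<open>Continuity at 0 of a character e(k alpha) of (Z, tau_b) yields a neighbourhood V_{b,m}
  on which ||k alpha|| < 1/4, since e maps the complement of T_1 at distance \<ge> 1 from 1.\<close>
lemma cont_char_small_on_Vb:
  assumes cont: "cont_char_Zb b chi" and chi: "\<And>k. chi k = turn (real_of_int k * \<alpha>)"
  shows "\<exists>m\<ge>1. \<forall>k\<in>Vb b m. tnorm (real_of_int k * \<alpha>) < 1/4"
proof -
  have "\<exists>m\<ge>1. \<forall>k\<in>Vb b m. cmod (chi (0 + k) - chi 0) < 1"
    using cont unfolding cont_char_Zb_def by (metis zero_less_one)
  then obtain m where m: "m \<ge> 1" "\<forall>k\<in>Vb b m. cmod (turn (real_of_int k * \<alpha>) - 1) < 1"
    by (auto simp: chi)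
  have "tnorm (real_of_int k * \<alpha>) < 1/4" if "k \<in> Vb b m" for k
    using m(2) that turn_far_from_one[of "real_of_int k * \<alpha>"] by (meson not_le)
  with m(1) show ?thesis by blast
qed

lemma coordinate_character:
  "cont_char_c0T (\<lambda>x. turn (real_of_int p * x N))"
  unfolding cont_char_c0T_def
proof (intro conjI ballI allI impI)
  fix x y :: "nat \<Rightarrow> real"
  show "turn (real_of_int p * (x N + y N)) = turn (real_of_int p * x N) * turn (real_of_int p * y N)"
    by (simp add: distrib_left turn_add)
next
  fix x :: "nat \<Rightarrow> real" assume "\<forall>n. x n \<in> \<int>"
  then obtain z where "x N = real_of_int z" by (meson Ints_cases)
  then show "turn (real_of_int p * x N) = 1" using turn_int[of "p * z"] by simp
next
  fix x0 :: "nat \<Rightarrow> real" and e :: real assume "e > 0"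
  then obtain d where d: "d > 0" "\<And>s. \<bar>s\<bar> < d \<Longrightarrow> cmod (turn (real_of_int p * s) - 1) < e"
    using turn_scaled_continuous_at_0 by blast
  show "\<exists>\<delta>>0. \<forall>y\<in>c0T. (\<forall>n. tnorm (y n - x0 n) < \<delta>) \<longrightarrow>
          cmod (turn (real_of_int p * y N) - turn (real_of_int p * x0 N)) < e"
  proof (intro exI[of _ d] conjI ballI impI d(1))
    fix y assume "\<forall>n. tnorm (y n - x0 n) < d"
    then have s: "\<bar>sdist (y N - x0 N)\<bar> < d" by (simp add: tnorm_sdist)
    have "turn (real_of_int p * y N)
        = turn (real_of_int p * x0 N) * turn (real_of_int p * (y N - x0 N))"
      by (simp add: turn_add[symmetric] algebra_simps)
    also have "turn (real_of_int p * (y N - x0 N)) = turn (real_of_int p * sdist (y N - x0 N))"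
      using turn_shift_int[of "real_of_int p * sdist (y N - x0 N)" "p * round (y N - x0 N)"]
      by (simp add: sdist_def algebra_simps)
    finally have "turn (real_of_int p * y N) - turn (real_of_int p * x0 N)
        = turn (real_of_int p * x0 N) * (turn (real_of_int p * sdist (y N - x0 N)) - 1)"
      by (simp add: right_diff_distrib)
    then have "cmod (turn (real_of_int p * y N) - turn (real_of_int p * x0 N))
        = cmod (turn (real_of_int p * sdist (y N - x0 N)) - 1)"
      by (simp add: norm_mult)
    then show "cmod (turn (real_of_int p * y N) - turn (real_of_int p * x0 N)) < e"
      using d(2)[OF s] by simp
  qed
qed simp_all

theorem corollary4p5:
  fixes b :: "nat \<Rightarrow> nat"
  assumes "D_sequence b"
    and "filterlim (\<lambda>n. real (b (Suc n)) / real (b n)) at_top sequentially"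
  shows "\<forall>chi. cont_char_Zb b chi \<longrightarrow>
           (\<exists>\<psi>. cont_char_c0T \<psi> \<and> (\<forall>k. chi k = \<psi> (iota b k)))"
proof (intro allI impI)
  fix chi assume cont: "cont_char_Zb b chi"
  then have "\<And>k. cmod (chi k) = 1" "\<And>k l. chi (k + l) = chi k * chi l"
    unfolding cont_char_Zb_def by auto
  then obtain \<alpha> where chi: "\<And>k. chi k = turn (real_of_int k * \<alpha>)"
    using unit_homomorphism_int by blast
  obtain m where "m \<ge> 1" "\<forall>k\<in>Vb b m. tnorm (real_of_int k * \<alpha>) < 1/4"
    using cont_char_small_on_Vb[OF cont chi] by blast
  then obtain N where N: "real (b N) * \<alpha> \<in> \<int>"
    using some_bN_alpha_integer[OF assms(1) _ assms(2)] by blast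
  obtain q where "b (Suc N) = b N * q" using D_step[OF assms(1)] by blast
  then have "real (b (Suc N)) * \<alpha> = real q * (real (b N) * \<alpha>)" by simp
  also have "\<dots> \<in> \<int>" by (rule Ints_mult[OF Ints_of_nat N])
  finally have "real (b (Suc N)) * \<alpha> \<in> \<int>" .
  then obtain p where p: "real (b (Suc N)) * \<alpha> = real_of_int p" by (auto elim: Ints_cases)
  have "real (b (Suc N)) > 0" using D_pos[OF assms(1)] by simp
  then have "real_of_int p * iota b k N = real_of_int k * \<alpha>" for k
    using p[symmetric] by (simp add: iota_def field_simps)
  then have "chi k = turn (real_of_int p * iota b k N)" for k
    by (simp add: chi)
  then show "\<exists>\<psi>. cont_char_c0T \<psi> \<and> (\<forall>k. chi k = \<psi> (iota b k))"
    using coordinate_character[of p N] by blast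
qed

end
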